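(* Let $I\subseteq\mathbb{R}$ be a closed, non-degenerate (possibly unbounded) interval and let $\mu$ be a continuous Borel probability measure on $\mathbb{R}$. Then $$1-\mu(I)=\inf\{d_{Ku}(\mu,\vartheta) : \vartheta\in P_c(\mathbb{R}),\ S_\vartheta\subseteq I\}.$$ Furthermore, if $\mu\in P_{ac}(\mathbb{R})$, then $$1-\mu(I)=\inf\{d_{Ku}(\mu,\vartheta) : \vartheta\in P_{ac}(\mathbb{R}),\ S_\vartheta\subseteq I\}.$$
   Context: $P_c(\mathbb{R})$ denotes the continuous (atomless) Borel probability measures on $\mathbb{R}$ and $P_{ac}(\mathbb{R})$ those absolutely continuous with respect to Lebesgue measure. $S_\vartheta$ is the closed support of $\vartheta$ (smallest closed set of full measure). The Kuiper distance is $d_{Ku}(\mu,\nu)=\sup\{|\mu(J)-\nu(J)| : J\text{ a non-degenerate interval of }\mathbb{R}\}$, equivalently $\sup_t(f_\mu(t)-f_\nu(t))+\sup_t(f_\nu(t)-f_\mu(t))$ with $f_\mu(t)=\mu((-\infty,t])$. *)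

theory Defs
  imports "HOL-Probability.Probability"
begin

definition Pc :: "real measure set" where
  "Pc = {M. prob_space M \<and> sets M = sets borel \<and> (\<forall>x. emeasure M {x} = 0)}"

definition Pac :: "real measure set" where
  "Pac = {M. prob_space M \<and> sets M = sets borel \<and> absolutely_continuous lborel M}"

definition supp :: "real measure \<Rightarrow> real set" where
  "supp M = \<Inter>{C. closed C \<and> emeasure M (UNIV - C) = 0}"

definition nondeg_interval :: "real set \<Rightarrow> bool" where
  "nondeg_interval J \<longleftrightarrow> is_interval J \<and> (\<exists>a\<in>J. \<exists>b\<in>J. a < b)"

definition d_Ku :: "real measure \<Rightarrow> real measure \<Rightarrow> real" where
  "d_Ku \<mu> \<nu> = Sup {\<bar>measure \<mu> J - measure \<nu> J\<bar> | J. nondeg_interval J}"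

end

theory Submission
  imports Defs
begin

text \<open>The lower bound is immediate: a measure \<open>\<nu>\<close> supported in \<open>I\<close> gives \<open>I\<close> mass 1, so already
  the interval \<open>I\<close> itself witnesses \<open>d\<^sub>K\<^sub>u(\<mu>, \<nu>) \<ge> 1 - \<mu>(I)\<close>. The bound is attained by
  conditioning: if \<open>\<mu>(I) = p > 0\<close>, the conditional measure \<open>\<nu> = \<mu>(\<cdot> \<inter> I)/p\<close> is continuous
  (absolutely continuous if \<open>\<mu>\<close> is) and for every interval \<open>J\<close> the difference
  \<open>\<mu>(J) - \<nu>(J) = \<mu>(J - I) - \<mu>(J \<inter> I)(1 - p)/p\<close> lies in \<open>[-(1-p), 1-p]\<close>. If \<open>\<mu>(I) = 0\<close>, the
  uniform distribution on any subinterval \<open>[a, b]\<close> of \<open>I\<close> does the job, because the Kuiper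
  distance never exceeds 1.\<close>

lemma emeasure_compl_supp:
  assumes "sets M = sets (borel :: real measure)"
  shows "emeasure M (UNIV - supp M) = 0"
proof -
  define F where "F = {UNIV - C | C. closed C \<and> emeasure M (UNIV - C) = 0}"
  have compl_supp: "UNIV - supp M = \<Union>F" unfolding F_def supp_def by blast
  have "\<And>S. S \<in> F \<Longrightarrow> open S" unfolding F_def by auto
  then obtain F' where F': "F' \<subseteq> F" "countable F'" "\<Union>F' = \<Union>F"
    by (rule Lindelof) blast
  have "S \<in> null_sets M" if "S \<in> F'" for S
  proof -
    from that F' obtain C where "S = UNIV - C" "closed C" "emeasure M (UNIV - C) = 0"
      unfolding F_def by blast
    moreover have "UNIV - C \<in> sets M" using assms \<open>closed C\<close> by auto
    ultimately show ?thesis by auto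
  qed
  then have "(\<Union>S\<in>F'. S) \<in> null_sets M" by (intro null_sets_UN') (use F' in auto)
  then show ?thesis using compl_supp F' by auto
qed

lemma supp_subsetI:
  assumes "closed C" "emeasure M (UNIV - C) = 0"
  shows "supp M \<subseteq> C"
  using assms unfolding supp_def by blast

lemma measure_eq_1_if_supp_subset:
  assumes "prob_space M" "sets M = sets borel" "closed C" "supp M \<subseteq> C"
  shows "measure M C = 1"
proof -
  interpret prob_space M by (rule assms(1))
  have closed_supp: "closed (supp M)" unfolding supp_def by (intro closed_Inter) auto
  have "emeasure M (UNIV - C) \<le> emeasure M (UNIV - supp M)"
    using assms(2,4) closed_supp by (intro emeasure_mono) auto
  then have "emeasure M (UNIV - C) = 0" using emeasure_compl_supp[OF assms(2)] by simp
  then show ?thesis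
    using prob_compl[of C] assms(2,3) sets_eq_imp_space_eq[OF assms(2)] by (simp add: measure_def)
qed

lemma Pac_subset_Pc: "Pac \<subseteq> Pc"
proof
  fix M assume "M \<in> Pac"
  then have "{x} \<in> null_sets M" for x :: real
    using countable_imp_null_set_lborel[of "{x}"] unfolding Pac_def absolutely_continuous_def by auto
  then show "M \<in> Pc" using \<open>M \<in> Pac\<close> unfolding Pac_def Pc_def by auto
qed

lemma nondeg_interval_UNIV: "nondeg_interval UNIV"
  unfolding nondeg_interval_def by (auto intro!: bexI[of _ 0] bexI[of _ 1])

lemma d_Ku_bdd_above:
  assumes "prob_space \<mu>" "prob_space \<nu>"
  shows "bdd_above {\<bar>measure \<mu> J - measure \<nu> J\<bar> | J. nondeg_interval J}"
proof -
  have "\<bar>measure \<mu> J - measure \<nu> J\<bar> \<le> 1" for J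
    using prob_space.prob_le_1[OF assms(1)] prob_space.prob_le_1[OF assms(2)]
    by (smt (verit) measure_nonneg)
  then show ?thesis by (auto intro!: bdd_aboveI)
qed

lemma measure_diff_le_d_Ku:
  assumes "prob_space \<mu>" "prob_space \<nu>" "nondeg_interval J"
  shows "\<bar>measure \<mu> J - measure \<nu> J\<bar> \<le> d_Ku \<mu> \<nu>"
  unfolding d_Ku_def using assms by (intro cSup_upper d_Ku_bdd_above) auto

lemma d_Ku_le:
  assumes "\<And>J. nondeg_interval J \<Longrightarrow> \<bar>measure \<mu> J - measure \<nu> J\<bar> \<le> c"
  shows "d_Ku \<mu> \<nu> \<le> c"
  unfolding d_Ku_def using assms nondeg_interval_UNIV by (intro cSup_least) auto

lemma d_Ku_le_1:
  assumes "prob_space \<mu>" "prob_space \<nu>"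
  shows "d_Ku \<mu> \<nu> \<le> 1"
  using prob_space.prob_le_1[OF assms(1)] prob_space.prob_le_1[OF assms(2)]
  by (intro d_Ku_le) (smt (verit) measure_nonneg)

lemma d_Ku_ge_supp_subset:
  assumes "prob_space \<mu>" "prob_space \<nu>" "sets \<nu> = sets borel"
    "nondeg_interval I" "closed I" "supp \<nu> \<subseteq> I"
  shows "1 - measure \<mu> I \<le> d_Ku \<mu> \<nu>"
  using measure_diff_le_d_Ku[OF assms(1,2,4)] measure_eq_1_if_supp_subset[OF assms(2,3,5,6)]
    prob_space.prob_le_1[OF assms(1)]
  by simp

lemma uniform_measure_in_Pc:
  assumes "sets M = sets borel" "\<And>x. emeasure M {x} = 0" "A \<in> sets M"
    "emeasure M A \<noteq> 0" "emeasure M A \<noteq> \<infinity>"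
  shows "uniform_measure M A \<in> Pc"
proof -
  have "emeasure (uniform_measure M A) {x} = 0" for x
  proof -
    have "emeasure M (A \<inter> {x}) \<le> emeasure M {x}" by (intro emeasure_mono) (auto simp: assms(1))
    then show ?thesis using assms by (simp add: emeasure_uniform_measure)
  qed
  then show ?thesis
    unfolding Pc_def using assms by (auto intro: prob_space_uniform_measure)
qed

lemma uniform_measure_in_Pac:
  assumes "sets M = sets borel" "absolutely_continuous lborel M" "A \<in> sets M"
    "emeasure M A \<noteq> 0" "emeasure M A \<noteq> \<infinity>"
  shows "uniform_measure M A \<in> Pac"
proof -
  have "N \<in> null_sets (uniform_measure M A)" if "N \<in> null_sets lborel" for N
  proof -
    have "N \<in> null_sets M" using that assms(2) unfolding absolutely_continuous_def by auto
    then have "emeasure M (A \<inter> N) = 0" using null_set_Int1 assms(3) by blast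
    then show ?thesis using that assms(1,3) by (auto simp: null_sets_def emeasure_uniform_measure)
  qed
  then show ?thesis
    unfolding Pac_def absolutely_continuous_def using assms
    by (auto intro: prob_space_uniform_measure)
qed

lemma supp_uniform_measure_subset:
  assumes "sets M = sets borel" "closed A"
  shows "supp (uniform_measure M A) \<subseteq> A"
proof (rule supp_subsetI[OF assms(2)])
  have "A \<in> sets M" "UNIV - A \<in> sets M" using assms by auto
  then show "emeasure (uniform_measure M A) (UNIV - A) = 0"
    by (simp add: emeasure_uniform_measure Int_Diff)
qed

lemma abs_add_minus_divide_le:
  fixes x y p :: real
  assumes "0 \<le> x" "x \<le> p" "0 \<le> y" "y \<le> 1 - p" "0 < p"
  shows "\<bar>(x + y) - x / p\<bar> \<le> 1 - p"
proof -
  have "x / p \<le> 1" "0 \<le> x / p" using assms by auto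
  moreover have "x / p - x = (x / p) * (1 - p)" using assms by (simp add: field_simps)
  ultimately have "0 \<le> x / p - x" "x / p - x \<le> 1 - p"
    using assms mult_left_le_one_le[of "1 - p" "x / p"] by auto
  then show ?thesis using assms by linarith
qed

lemma d_Ku_uniform_measure_le:
  assumes "prob_space \<mu>" "sets \<mu> = sets borel" "A \<in> sets borel" "measure \<mu> A > 0"
  shows "d_Ku \<mu> (uniform_measure \<mu> A) \<le> 1 - measure \<mu> A"
proof (rule d_Ku_le)
  interpret prob_space \<mu> by (rule assms(1))
  fix J :: "real set" assume "nondeg_interval J"
  then have J: "J \<in> sets \<mu>"
    using assms(2) real_interval_borel_measurable unfolding nondeg_interval_def by blast
  have A: "A \<in> sets \<mu>" using assms(2,3) by simp
  have "measure \<mu> J = measure \<mu> (A \<inter> J) + measure \<mu> (J - A)"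
    using J A by (subst finite_measure_Union[symmetric]) (auto intro: arg_cong[where f="measure \<mu>"])
  moreover have "measure (uniform_measure \<mu> A) J = measure \<mu> (A \<inter> J) / measure \<mu> A"
    using J A assms(4) by (intro measure_uniform_measure) (auto simp: emeasure_eq_measure)
  moreover have "measure \<mu> (A \<inter> J) \<le> measure \<mu> A" using A by (intro finite_measure_mono) auto
  moreover have "measure \<mu> (J - A) \<le> measure \<mu> (space \<mu> - A)"
    using J A sets.sets_into_space[OF J] sets.compl_sets[OF A] by (intro finite_measure_mono) auto
  then have "measure \<mu> (J - A) \<le> 1 - measure \<mu> A" using prob_compl[OF A] by simp
  ultimately show "\<bar>measure \<mu> J - measure (uniform_measure \<mu> A) J\<bar> \<le> 1 - measure \<mu> A"
    using assms(4) by (auto intro!: abs_add_minus_divide_le)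
qed

lemma exists_supp_subset_d_Ku_le:
  assumes "nondeg_interval I" "closed I" "\<mu> \<in> Pc"
  obtains \<nu> where "\<mu> \<in> Pac \<longrightarrow> \<nu> \<in> Pac" "\<nu> \<in> Pc" "supp \<nu> \<subseteq> I" "d_Ku \<mu> \<nu> \<le> 1 - measure \<mu> I"
proof (cases "measure \<mu> I = 0")
  case True
  obtain a b where "a \<in> I" "b \<in> I" "a < b" using assms(1) unfolding nondeg_interval_def by blast
  then have ab: "{a..b} \<subseteq> I" using assms(1) unfolding nondeg_interval_def
    by (metis atLeastAtMost_iff is_interval_1 subsetI)
  define \<nu> where "\<nu> = uniform_measure lborel {a..b}"
  have "\<nu> \<in> Pac"
    unfolding \<nu>_def using \<open>a < b\<close>
    by (intro uniform_measure_in_Pac) (auto simp: absolutely_continuous_def)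
  moreover have "supp \<nu> \<subseteq> I" using supp_uniform_measure_subset[of lborel "{a..b}"] ab
    unfolding \<nu>_def by auto
  moreover have "d_Ku \<mu> \<nu> \<le> 1"
    using \<open>\<nu> \<in> Pac\<close> assms(3) unfolding Pac_def Pc_def by (auto intro: d_Ku_le_1)
  ultimately show ?thesis using that True Pac_subset_Pc by auto
next
  case False
  have \<mu>: "prob_space \<mu>" "sets \<mu> = sets borel" using assms(3) unfolding Pc_def by auto
  then interpret prob_space \<mu> by simp
  have I: "I \<in> sets \<mu>" "emeasure \<mu> I \<noteq> 0" "emeasure \<mu> I \<noteq> \<infinity>"
    using False assms(2) \<mu>(2) by (auto simp: emeasure_eq_measure)
  define \<nu> where "\<nu> = uniform_measure \<mu> I"
  have "\<nu> \<in> Pac" if "\<mu> \<in> Pac"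
    unfolding \<nu>_def using that I \<mu>(2) by (intro uniform_measure_in_Pac) (auto simp: Pac_def)
  moreover have "\<nu> \<in> Pc"
    unfolding \<nu>_def using assms(3) I \<mu>(2) by (intro uniform_measure_in_Pc) (auto simp: Pc_def)
  moreover have "supp \<nu> \<subseteq> I" unfolding \<nu>_def using \<mu>(2) assms(2) by (rule supp_uniform_measure_subset)
  moreover have "d_Ku \<mu> \<nu> \<le> 1 - measure \<mu> I"
    unfolding \<nu>_def using \<mu> assms(2) False measure_nonneg[of \<mu> I]
    by (intro d_Ku_uniform_measure_le) (auto simp del: measure_nonneg)
  ultimately show ?thesis using that by blast
qed

lemma Inf_d_Ku_supp_subset_eq:
  assumes "nondeg_interval I" "closed I" "prob_space \<mu>"
    and "\<And>\<nu>. \<nu> \<in> P \<Longrightarrow> prob_space \<nu> \<and> sets \<nu> = sets borel"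
    and "\<nu> \<in> P" "supp \<nu> \<subseteq> I" "d_Ku \<mu> \<nu> \<le> 1 - measure \<mu> I"
  shows "1 - measure \<mu> I = Inf {d_Ku \<mu> \<nu> | \<nu>. \<nu> \<in> P \<and> supp \<nu> \<subseteq> I}"
proof (rule cInf_eq_minimum[symmetric])
  show "1 - measure \<mu> I \<in> {d_Ku \<mu> \<nu> | \<nu>. \<nu> \<in> P \<and> supp \<nu> \<subseteq> I}"
    using assms d_Ku_ge_supp_subset[of \<mu> \<nu> I] by (intro CollectI exI[of _ \<nu>]) force
qed (use assms d_Ku_ge_supp_subset in blast)

theorem lemma2p4:
  fixes I :: "real set" and \<mu> :: "real measure"
  assumes "nondeg_interval I" and "closed I"
    and "\<mu> \<in> Pc"
  shows "1 - measure \<mu> I = Inf {d_Ku \<mu> \<nu> | \<nu>. \<nu> \<in> Pc \<and> supp \<nu> \<subseteq> I}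
    \<and> (\<mu> \<in> Pac \<longrightarrow> 1 - measure \<mu> I = Inf {d_Ku \<mu> \<nu> | \<nu>. \<nu> \<in> Pac \<and> supp \<nu> \<subseteq> I})"
proof -
  have \<mu>: "prob_space \<mu>" using assms(3) unfolding Pc_def by auto
  obtain \<nu> where \<nu>: "\<mu> \<in> Pac \<longrightarrow> \<nu> \<in> Pac" "\<nu> \<in> Pc" "supp \<nu> \<subseteq> I" "d_Ku \<mu> \<nu> \<le> 1 - measure \<mu> I"
    using exists_supp_subset_d_Ku_le[OF assms] .
  show ?thesis
    using Inf_d_Ku_supp_subset_eq[OF assms(1,2) \<mu>, of Pc \<nu>]
      Inf_d_Ku_supp_subset_eq[OF assms(1,2) \<mu>, of Pac \<nu>] \<nu>
    unfolding Pc_def Pac_def by auto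
qed

end
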